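(* Let $N=pq$ with $p,q$ distinct primes. Let $d\in\mathbb{N}$ and $b_1,\dots,b_d\in\mathbb{Z}$. For each $i$ let $f_i=n_{2,i}X^2+n_{1,i}X+n_{0,i}\in\mathbb{Z}[X]$ be a polynomial of degree $2$ with $f_i(b_i)=N$. Suppose $\gcd(n_{2,i}b_i,N)=1$ for every $i$, and define $b_{d+i}:=n_{0,i}\cdot n_{2,i}^{-1}\cdot b_i^{-1}\bmod N$ for $1\le i\le d$ (inverses taken modulo $N$). If $\gcd(b_j-b_k,N)=1$ for all $j,k\in\{1,\dots,2d\}$ with $j\neq k$, then \[\nu\Big(\prod_{i=1}^d f_i\Big)=2dp+2dq-8d^2.\]
   Context: $Z_N=\{0,1,\dots,N-1\}$. For $g\in\mathbb{Z}[X]$, an element $x\in Z_N$ is called suitable for $g$ if $1<\gcd(g(x),N)<N$, and $\nu(g)$ denotes the number of $x\in Z_N$ suitable for $g$. *)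

theory Defs
  imports "HOL-Computational_Algebra.Polynomial" "HOL-Number_Theory.Number_Theory"
begin

definition suitable :: "int \<Rightarrow> int poly \<Rightarrow> int \<Rightarrow> bool" where
  "suitable N g x \<longleftrightarrow> x \<in> {0..N-1} \<and> 1 < gcd (poly g x) N \<and> gcd (poly g x) N < N"

definition nu :: "int \<Rightarrow> int poly \<Rightarrow> nat" where
  "nu N g = card {x \<in> {0..N-1}. suitable N g x}"

text \<open>An inverse of a modulo N (a chosen representative; only used under coprimality,
  and only its residue mod N matters).\<close>
definition inv_modN :: "int \<Rightarrow> int \<Rightarrow> int" where
  "inv_modN N a = (SOME y. [a * y = 1] (mod N))"

end

theory Submission
  imports Defs
begin

(* Let r be p or q. Modulo r, each f_i factors as n_{2,i} (X - b_i) (X - b_{d+i}): b_i is a root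
   mod N, and n_{2,i} b_i b_{d+i} = n_{0,i} mod N is Vieta's product of the roots, which together
   with the invertibility of b_i also yields Vieta's sum. Since r does not divide n_{2,i}, r divides
   (prod f_i)(x) iff x mod r is one of the residues of b_1, ..., b_{2d} mod r, and these are 2d
   distinct residues by the pairwise coprimality. Via the Chinese remainder map x |-> (x mod p, x mod q),
   x is suitable iff exactly one of the two residue conditions holds, which happens for
   2d (q - 2d) + (p - 2d) 2d residues x mod N. *)

lemma coprime_prime_right_iff:
  fixes p a :: int
  assumes "prime p"
  shows "coprime a p \<longleftrightarrow> \<not> p dvd a"
  using assms by (meson coprime_common_divisor coprime_commute dvd_refl not_prime_unit
      prime_imp_coprime_int)

lemma proper_gcd_prime_product_iff:
  fixes p q a :: int
  assumes "prime p" "prime q" "p \<noteq> q"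
  shows "1 < gcd a (p * q) \<and> gcd a (p * q) < p * q \<longleftrightarrow> (p dvd a \<longleftrightarrow> \<not> q dvd a)"
proof -
  have "p * q > 0" using assms by (simp add: prime_gt_0_int)
  then have bounds: "0 < gcd a (p * q)" "gcd a (p * q) \<le> p * q"
    by (auto simp: zdvd_imp_le)
  have "gcd a (p * q) = 1 \<longleftrightarrow> \<not> p dvd a \<and> \<not> q dvd a"
    using assms by (simp add: coprime_prime_right_iff flip: coprime_iff_gcd_eq_1)
  moreover have "gcd a (p * q) = p * q \<longleftrightarrow> p * q dvd a"
    using \<open>p * q > 0\<close> gcd_proj2_iff[of a "p * q"] by simp
  moreover have "p * q dvd a \<longleftrightarrow> p dvd a \<and> q dvd a"
    using primes_coprime[OF assms] divides_mult[of p a q] by (auto dest: dvd_mult_left)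
  ultimately show ?thesis using bounds by smt
qed

lemma bij_betw_mod_pair:
  fixes m n :: int
  assumes "coprime m n" "m > 0" "n > 0"
  shows "bij_betw (\<lambda>x. (x mod m, x mod n)) {0..<m * n} ({0..<m} \<times> {0..<n})"
proof -
  let ?f = "\<lambda>x. (x mod m, x mod n)"
  have inj: "inj_on ?f {0..<m * n}"
  proof
    fix x y assume x: "x \<in> {0..<m * n}" and y: "y \<in> {0..<m * n}" and "?f x = ?f y"
    then have "m dvd x - y" "n dvd x - y" by (simp_all add: mod_eq_dvd_iff)
    then have "m * n dvd x - y" using \<open>coprime m n\<close> by (rule divides_mult)
    moreover have "\<bar>x - y\<bar> < m * n" using x y by auto
    ultimately show "x = y" using dvd_imp_le_int[of "x - y" "m * n"] by fastforce
  qed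
  have "?f ` {0..<m * n} \<subseteq> {0..<m} \<times> {0..<n}" using assms by auto
  moreover have "card (?f ` {0..<m * n}) = card ({0..<m} \<times> {0..<n})"
    using assms by (simp add: card_image[OF inj] card_cartesian_product nat_mult_distrib)
  ultimately have "?f ` {0..<m * n} = {0..<m} \<times> {0..<n}"
    by (intro card_subset_eq) auto
  with inj show ?thesis by (simp add: bij_betw_def)
qed

lemma card_mod_pair_xor:
  fixes m n :: int and A B :: "int set"
  assumes "coprime m n" "m > 0" "n > 0" "A \<subseteq> {0..<m}" "B \<subseteq> {0..<n}"
  shows "int (card {x \<in> {0..<m * n}. x mod m \<in> A \<longleftrightarrow> x mod n \<notin> B})
    = int (card A) * (n - int (card B)) + (m - int (card A)) * int (card B)"
proof -
  let ?f = "\<lambda>x. (x mod m, x mod n)"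
  let ?S = "{x \<in> {0..<m * n}. x mod m \<in> A \<longleftrightarrow> x mod n \<notin> B}"
  have bij: "bij_betw ?f {0..<m * n} ({0..<m} \<times> {0..<n})"
    using assms(1-3) by (rule bij_betw_mod_pair)
  have "?f ` ?S = {y \<in> ?f ` {0..<m * n}. fst y \<in> A \<longleftrightarrow> snd y \<notin> B}"
    by auto
  also have "\<dots> = A \<times> ({0..<n} - B) \<union> ({0..<m} - A) \<times> B"
    using bij_betw_imp_surj_on[OF bij] assms(4,5) by auto
  finally have image: "?f ` ?S = A \<times> ({0..<n} - B) \<union> ({0..<m} - A) \<times> B" .
  have "inj_on ?f ?S"
    using bij_betw_imp_inj_on[OF bij] by (rule inj_on_subset) blast
  then have "card ?S = card (?f ` ?S)"
    by (rule card_image[symmetric])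
  also have "\<dots> = card (A \<times> ({0..<n} - B) \<union> ({0..<m} - A) \<times> B)"
    unfolding image ..
  also have "\<dots> = card A * card ({0..<n} - B) + card ({0..<m} - A) * card B"
    using assms(4,5) finite_subset[OF assms(4)] finite_subset[OF assms(5)]
    by (subst card_Un_disjoint) (auto simp: card_cartesian_product)
  also have "\<dots> = card A * (nat n - card B) + (nat m - card A) * card B"
    using assms(4,5) finite_subset[OF assms(4)] finite_subset[OF assms(5)]
    by (simp add: card_Diff_subset)
  finally show ?thesis
    using card_mono[OF _ assms(4)] card_mono[OF _ assms(5)] assms(2,3) by simp
qed

lemma card_image_mod_prime_divisor:
  fixes r N :: int and b :: "'j \<Rightarrow> int"
  assumes "prime r" "r dvd N" "\<forall>j\<in>J. \<forall>k\<in>J. j \<noteq> k \<longrightarrow> coprime (b j - b k) N"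
  shows "card ((\<lambda>j. b j mod r) ` J) = card J"
proof (rule card_image, rule inj_onI)
  fix j k assume "j \<in> J" "k \<in> J" "b j mod r = b k mod r"
  then have "r dvd b j - b k" "j \<noteq> k \<longrightarrow> coprime (b j - b k) N"
    using assms(3) by (simp_all add: mod_eq_dvd_iff)
  with assms(1,2) show "j = k"
    using coprime_common_divisor not_prime_unit by blast
qed

lemma bex_atLeastAtMost_double:
  fixes d :: nat
  shows "(\<exists>j\<in>{1..2 * d}. P j) \<longleftrightarrow> (\<exists>i\<in>{1..d}. P i \<or> P (d + i))"
proof
  assume "\<exists>j\<in>{1..2 * d}. P j"
  then obtain j where j: "j \<in> {1..2 * d}" "P j" by blast
  show "\<exists>i\<in>{1..d}. P i \<or> P (d + i)"
  proof (cases "j \<le> d")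
    case True
    with j show ?thesis by auto
  next
    case False
    with j have "j - d \<in> {1..d}" "P (d + (j - d))" by auto
    then show ?thesis by blast
  qed
qed auto

lemma quadratic_cong_factor:
  fixes N n0 n1 n2 b c x :: int
  assumes root: "[poly [:n0, n1, n2:] b = 0] (mod N)" and prod: "[n2 * b * c = n0] (mod N)"
    and "coprime b N"
  shows "[poly [:n0, n1, n2:] x = n2 * (x - b) * (x - c)] (mod N)"
proof -
  have root_dvd: "N dvd poly [:n0, n1, n2:] b" and prod_dvd: "N dvd n0 - n2 * b * c"
    using root prod by (simp_all add: cong_0_iff cong_iff_dvd_diff dvd_diff_commute)
  have "b * (n1 + n2 * (b + c)) = poly [:n0, n1, n2:] b - (n0 - n2 * b * c)"
    by (simp add: algebra_simps)
  with root_dvd prod_dvd have "N dvd b * (n1 + n2 * (b + c))" by (metis dvd_diff)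
  then have sum: "N dvd n1 + n2 * (b + c)"
    using \<open>coprime b N\<close> by (metis coprime_commute coprime_dvd_mult_right_iff)
  have "poly [:n0, n1, n2:] x - n2 * (x - b) * (x - c) = x * (n1 + n2 * (b + c)) + (n0 - n2 * b * c)"
    by (simp add: algebra_simps)
  also have "N dvd \<dots>"
    using dvd_mult[OF sum] prod_dvd by (rule dvd_add)
  finally show ?thesis
    by (simp add: cong_iff_dvd_diff)
qed

lemma prime_dvd_prod_quadratics_iff:
  fixes r N x :: int and I :: "'i set" and n0 n1 n2 b c :: "'i \<Rightarrow> int"
  assumes "finite I" "prime r" "r dvd N"
    and root: "\<forall>i\<in>I. [poly [:n0 i, n1 i, n2 i:] (b i) = 0] (mod N)"
    and prod: "\<forall>i\<in>I. [n2 i * b i * c i = n0 i] (mod N)"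
    and cop: "\<forall>i\<in>I. coprime (n2 i * b i) N"
  shows "r dvd poly (\<Prod>i\<in>I. [:n0 i, n1 i, n2 i:]) x
    \<longleftrightarrow> (\<exists>i\<in>I. [x = b i] (mod r) \<or> [x = c i] (mod r))"
proof -
  have "r dvd poly [:n0 i, n1 i, n2 i:] x \<longleftrightarrow> [x = b i] (mod r) \<or> [x = c i] (mod r)"
    if "i \<in> I" for i
  proof -
    have "coprime (n2 i) N" "coprime (b i) N" using cop \<open>i \<in> I\<close> by simp_all
    have "[poly [:n0 i, n1 i, n2 i:] x = n2 i * (x - b i) * (x - c i)] (mod N)"
      using root prod \<open>i \<in> I\<close> \<open>coprime (b i) N\<close> by (intro quadratic_cong_factor) simp_all
    then have "[poly [:n0 i, n1 i, n2 i:] x = n2 i * (x - b i) * (x - c i)] (mod r)"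
      using \<open>r dvd N\<close> by (rule cong_dvd_modulus)
    moreover have "\<not> r dvd n2 i"
    proof
      assume "r dvd n2 i"
      with \<open>coprime (n2 i) N\<close> have "is_unit r"
        using \<open>r dvd N\<close> by (rule coprime_common_divisor)
      with \<open>prime r\<close> show False using not_prime_unit by blast
    qed
    ultimately have "r dvd poly [:n0 i, n1 i, n2 i:] x \<longleftrightarrow> r dvd x - b i \<or> r dvd x - c i"
      using \<open>prime r\<close> by (simp add: cong_dvd_iff prime_dvd_mult_iff)
    then show ?thesis by (simp add: cong_iff_dvd_diff)
  qed
  then show ?thesis
    unfolding poly_prod using assms(1,2) by (simp add: prime_dvd_prod_iff)
qed

lemma inv_modN_cong:
  fixes N a :: int
  assumes "coprime a N"
  shows "[a * inv_modN N a = 1] (mod N)"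
  unfolding inv_modN_def using cong_solve_coprime_int[OF assms] by (rule someI_ex)

lemma inv_modN_mult_mod_cong:
  fixes N a c :: int
  assumes "coprime a N"
  shows "[a * ((c * inv_modN N a) mod N) = c] (mod N)"
proof -
  have "[a * ((c * inv_modN N a) mod N) = c * (a * inv_modN N a)] (mod N)"
    by (metis cong_mod_right cong_refl cong_scalar_left mult.left_commute)
  also have "[c * (a * inv_modN N a) = c * 1] (mod N)"
    using inv_modN_cong[OF assms] by (rule cong_scalar_left)
  finally show ?thesis by simp
qed

lemma prime_dvd_prod_quadratics_roots_iff:
  fixes r N x :: int and d :: nat and b n2 n1 n0 :: "nat \<Rightarrow> int"
  assumes "prime r" "r dvd N"
    and root: "\<forall>i\<in>{1..d}. poly [:n0 i, n1 i, n2 i:] (b i) = N"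
    and cop: "\<forall>i\<in>{1..d}. coprime (n2 i * b i) N"
    and second_root: "\<forall>i\<in>{1..d}. b (d + i) = (n0 i * inv_modN N (n2 i * b i)) mod N"
  shows "r dvd poly (\<Prod>i\<in>{1..d}. [:n0 i, n1 i, n2 i:]) x \<longleftrightarrow> (\<exists>j\<in>{1..2*d}. [x = b j] (mod r))"
proof -
  have "\<forall>i\<in>{1..d}. [poly [:n0 i, n1 i, n2 i:] (b i) = 0] (mod N)"
    using root by (simp add: cong_0_iff)
  moreover have "\<forall>i\<in>{1..d}. [n2 i * b i * b (d + i) = n0 i] (mod N)"
    using second_root cop inv_modN_mult_mod_cong by simp
  ultimately have "r dvd poly (\<Prod>i\<in>{1..d}. [:n0 i, n1 i, n2 i:]) x
      \<longleftrightarrow> (\<exists>i\<in>{1..d}. [x = b i] (mod r) \<or> [x = b (d + i)] (mod r))"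
    using cop by (rule prime_dvd_prod_quadratics_iff[OF finite_atLeastAtMost assms(1,2)])
  also have "\<dots> \<longleftrightarrow> (\<exists>j\<in>{1..2*d}. [x = b j] (mod r))"
    by (rule bex_atLeastAtMost_double[symmetric])
  finally show ?thesis .
qed

theorem theorem2p11:
  fixes p q N :: int and d :: nat and b n2 n1 n0 :: "nat \<Rightarrow> int"
  assumes "prime p" and "prime q" and "p \<noteq> q" and "N = p * q"
    and deg: "\<forall>i\<in>{1..d}. n2 i \<noteq> 0"
    and root: "\<forall>i\<in>{1..d}. poly [:n0 i, n1 i, n2 i:] (b i) = N"
    and cop: "\<forall>i\<in>{1..d}. gcd (n2 i * b i) N = 1"
    and "\<forall>i\<in>{1..d}. b (d + i) = (n0 i * inv_modN N (n2 i * b i)) mod N"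
    and "\<forall>j\<in>{1..2*d}. \<forall>k\<in>{1..2*d}. j \<noteq> k \<longrightarrow> gcd (b j - b k) N = 1"
  shows "int (nu N (\<Prod>i\<in>{1..d}. [:n0 i, n1 i, n2 i:])) = 2*d*p + 2*d*q - 8*d^2"
proof -
  define g where "g = (\<Prod>i\<in>{1..d}. [:n0 i, n1 i, n2 i:])"
  define B where "B r = (\<lambda>j. b j mod r) ` {1..2*d}" for r
  have prime_divisor: "prime r" "r dvd N" if "r \<in> {p, q}" for r
    using that assms(1,2,4) by auto
  have cop': "\<forall>i\<in>{1..d}. coprime (n2 i * b i) N"
    and cop_b: "\<forall>j\<in>{1..2*d}. \<forall>k\<in>{1..2*d}. j \<noteq> k \<longrightarrow> coprime (b j - b k) N"
    using cop assms(9) by (simp_all add: coprime_iff_gcd_eq_1)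
  have dvd_g_iff: "r dvd poly g x \<longleftrightarrow> x mod r \<in> B r" if "r \<in> {p, q}" for r x
    unfolding g_def prime_dvd_prod_quadratics_roots_iff[OF prime_divisor[OF that] root cop' assms(8)]
      B_def cong_def image_iff by (rule refl)
  have card_B: "card (B r) = 2 * d" if "r \<in> {p, q}" for r
    unfolding B_def using card_image_mod_prime_divisor[OF prime_divisor[OF that] cop_b] by simp
  have dvd_p: "p dvd poly g x \<longleftrightarrow> x mod p \<in> B p" and dvd_q: "q dvd poly g x \<longleftrightarrow> x mod q \<in> B q" for x
    using dvd_g_iff by simp_all
  have "x \<in> {0..N-1} \<and> suitable N g x
      \<longleftrightarrow> x \<in> {0..<p * q} \<and> (x mod p \<in> B p \<longleftrightarrow> x mod q \<notin> B q)" for x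
    unfolding suitable_def assms(4) proper_gcd_prime_product_iff[OF assms(1-3)] dvd_p dvd_q by auto
  then have suitable_set:
    "{x \<in> {0..N-1}. suitable N g x} = {x \<in> {0..<p * q}. x mod p \<in> B p \<longleftrightarrow> x mod q \<notin> B q}"
    by (rule Collect_cong)
  have pos: "p > 0" "q > 0" using assms(1,2) by (simp_all add: prime_gt_0_int)
  then have "B p \<subseteq> {0..<p}" "B q \<subseteq> {0..<q}" by (auto simp: B_def)
  then have "int (nu N g)
      = int (card (B p)) * (q - int (card (B q))) + (p - int (card (B p))) * int (card (B q))"
    unfolding nu_def suitable_set by (rule card_mod_pair_xor[OF primes_coprime[OF assms(1-3)] pos])
  then show ?thesis using card_B by (simp add: g_def algebra_simps power2_eq_square)
qed

end
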